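(* Let $T,\Omega\subseteq\mathbb{R}$ be measurable with $0<|T|\,|\Omega|<\infty$, and let $f\in L^1(\mathbb{R})$ with $\widehat f\in L^1(\mathbb{R})$, $f\ne0$. Suppose $f$ is $\varepsilon_T$-concentrated on $T$ and $\widehat f$ is $\varepsilon_\Omega$-concentrated on $\Omega$, with $0\le\varepsilon_T,\varepsilon_\Omega\le1$, $\varepsilon_T+\varepsilon_\Omega\le1$. Then \[ \Delta f\,\Delta\widehat f\ge\frac{(1-\varepsilon_T^2)(1-\varepsilon_\Omega^2)}{4\pi^2|T|\,|\Omega|}\,\|f\|_2^2, \] where $\Delta f=\big(\int_{\mathbb{R}}|t|^2|f(t)|^2dt\big)^{1/2}$ and $\Delta\widehat f=\big(\int_{\mathbb{R}}|\omega|^2|\widehat f(\omega)|^2d\omega\big)^{1/2}$.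
   Context: Fourier transform $\widehat f(\omega)=\int e^{-2\pi i x\omega}f(x)\,dx$; $|\cdot|$ is Lebesgue measure. For $\varepsilon\ge0$, $f\in L^2(\mathbb{R})$ is $\varepsilon$-concentrated on a measurable set $U$ if $\big(\int_{\mathbb{R}\setminus U}|f|^2\big)^{1/2}\le\varepsilon\|f\|_2$. *)

theory Defs
  imports "HOL-Analysis.Analysis"
begin

definition fourier :: "(real \<Rightarrow> complex) \<Rightarrow> real \<Rightarrow> complex" where
  "fourier f \<omega> = integral\<^sup>L lebesgue (\<lambda>x. cis (- 2 * pi * x * \<omega>) * f x)"

definition L2_norm_sq :: "(real \<Rightarrow> complex) \<Rightarrow> ennreal" where
  "L2_norm_sq f = (\<integral>\<^sup>+ x. ennreal ((cmod (f x))\<^sup>2) \<partial>lebesgue)"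

text \<open>epsilon-concentration on U: (int_{R\U} |f|^2)^(1/2) <= eps * ||f||_2,
  written equivalently (eps >= 0) in squared form.\<close>
definition eps_concentrated :: "real \<Rightarrow> real set \<Rightarrow> (real \<Rightarrow> complex) \<Rightarrow> bool" where
  "eps_concentrated \<epsilon> U f \<longleftrightarrow> \<epsilon> \<ge> 0 \<and>
     (\<integral>\<^sup>+ x. indicator (UNIV - U) x * ennreal ((cmod (f x))\<^sup>2) \<partial>lebesgue)
       \<le> ennreal (\<epsilon>\<^sup>2) * L2_norm_sq f"

definition dispersion_sq :: "(real \<Rightarrow> complex) \<Rightarrow> ennreal" where
  "dispersion_sq f = (\<integral>\<^sup>+ t. ennreal (\<bar>t\<bar>\<^sup>2 * (cmod (f t))\<^sup>2) \<partial>lebesgue)"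

end

theory Submission
  imports Defs "HOL-Probability.Probability"
begin

text \<open>By Plancherel, \<open>f\<close> and \<open>f\<^sup>^\<close> have the same \<open>L\<^sup>2\<close> norm \<open>n\<close>. Fourier inversion bounds
  \<open>|f|\<close> pointwise by \<open>\<parallel>f\<^sup>^\<parallel>\<^sub>1\<close>, so concentration on \<open>T\<close> gives \<open>(1 - \<epsilon>T\<^sup>2) n \<le> \<parallel>f\<^sup>^\<parallel>\<^sub>1\<^sup>2 |T|\<close>, and
  symmetrically \<open>(1 - \<epsilon>\<Omega>\<^sup>2) n \<le> \<parallel>f\<parallel>\<^sub>1\<^sup>2 |\<Omega>|\<close>. A weighted Cauchy--Schwarz inequality (Carlson type)
  gives \<open>\<parallel>f\<parallel>\<^sub>1\<^sup>4 \<le> 4\<pi>\<^sup>2 n (\<Delta>f)\<^sup>2\<close> and likewise for \<open>f\<^sup>^\<close>; multiplying the four inequalities yields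
  the bound. Inversion itself is obtained by damping with a Gaussian, whose transform is known, and
  appealing to the uniqueness of characteristic functions.\<close>

lemma borel_measurable_cis[measurable]: "cis \<in> borel_measurable borel"
proof -
  have e: "cis = (\<lambda>x::real. exp (\<i> * complex_of_real x))" by (simp add: cis_conv_exp fun_eq_iff)
  show ?thesis unfolding e by measurable
qed

lemma borel_measurable_cnj[measurable (raw)]:
  assumes [measurable]: "f \<in> borel_measurable M"
  shows "(\<lambda>x. cnj (f x)) \<in> borel_measurable M"
proof -
  have "(\<lambda>x. cnj (f x)) = (\<lambda>x. complex_of_real (Re (f x)) - \<i> * complex_of_real (Im (f x)))"
    by (simp add: fun_eq_iff complex_eq_iff)
  then show ?thesis by (simp only:) measurable
qed

lemma integrable_cis_mult:
  fixes g :: "'a \<Rightarrow> complex"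
  assumes g: "integrable M g" and h[measurable]: "h \<in> borel_measurable M"
  shows "integrable M (\<lambda>x. cis (h x) * g x)"
proof (rule Bochner_Integration.integrable_bound[OF g])
  have [measurable]: "g \<in> borel_measurable M" using borel_measurable_integrable[OF g] .
  show "(\<lambda>x. cis (h x) * g x) \<in> borel_measurable M" by measurable
  show "AE x in M. norm (cis (h x) * g x) \<le> norm (g x)" by (simp add: norm_mult)
qed

lemma std_normal_density_rescaled:
  "std_normal_density (sqrt (2 * pi) * x) = exp (- pi * x\<^sup>2) / sqrt (2 * pi)"
proof -
  have "(sqrt (2 * pi) * x)\<^sup>2 / 2 = pi * x\<^sup>2" by (simp add: power_mult_distrib)
  then show ?thesis by (simp add: std_normal_density_def real_sqrt_mult)
qed

lemma integral_cis_gaussian: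
  "(\<integral>x. cis (w * x) * complex_of_real (exp (- pi * x\<^sup>2)) \<partial>lborel) = exp (- w\<^sup>2 / (4 * pi))"
proof -
  define c where "c = sqrt (2 * pi)"
  have c0: "c > 0" and cc: "c\<^sup>2 = 2 * pi" unfolding c_def by simp_all
  have std_normal_char: "(\<integral>x. std_normal_density x *\<^sub>R cis (t * x) \<partial>lborel) = exp (- t\<^sup>2 / 2)" for t
  proof -
    have "char std_normal_distribution t = (\<integral>x. std_normal_density x *\<^sub>R cis (t * x) \<partial>lborel)"
      unfolding char_def by (subst integral_density) (auto simp: normal_density_nonneg cis_conv_exp)
    then show ?thesis by (simp add: char_std_normal_distribution)
  qed
  have rescale: "std_normal_density (0 + c * x) *\<^sub>R cis (w / c * (0 + c * x))
      = (1 / c) *\<^sub>R (cis (w * x) * complex_of_real (exp (- pi * x\<^sup>2)))" for x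
    using c0 by (simp add: c_def std_normal_density_rescaled scaleR_conv_of_real)
  have "(\<integral>x. cis (w * x) * complex_of_real (exp (- pi * x\<^sup>2)) \<partial>lborel)
      = \<bar>c\<bar> *\<^sub>R (\<integral>x. (1 / c) *\<^sub>R (cis (w * x) * complex_of_real (exp (- pi * x\<^sup>2))) \<partial>lborel)"
    using c0 by simp
  also have "\<dots> = \<bar>c\<bar> *\<^sub>R (\<integral>x. std_normal_density (0 + c * x) *\<^sub>R cis (w / c * (0 + c * x)) \<partial>lborel)"
    by (simp only: rescale)
  also have "\<dots> = (\<integral>x. std_normal_density x *\<^sub>R cis (w / c * x) \<partial>lborel)"
    using c0 by (intro lborel_integral_real_affine[symmetric]) simp
  also have "\<dots> = exp (- (w / c)\<^sup>2 / 2)"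
    by (rule std_normal_char)
  also have "\<dots> = exp (- w\<^sup>2 / (4 * pi))"
    using cc by (simp add: power_divide)
  finally show ?thesis .
qed

lemma integrable_gaussian: "integrable lborel (\<lambda>x. exp (- pi * x\<^sup>2))"
proof -
  define c where "c = sqrt (2 * pi)"
  have "integrable lborel std_normal_density"
    using integrable_std_normal_moment[of 0] by simp
  then have "integrable lborel (\<lambda>x. c * std_normal_density (0 + c * x))"
    unfolding c_def by (intro integrable_mult_right lborel_integrable_real_affine) auto
  moreover have "c * std_normal_density (0 + c * x) = exp (- pi * x\<^sup>2)" for x
    by (simp add: c_def std_normal_density_rescaled)
  ultimately show ?thesis by (simp only:)
qed

lemma integrable_shifted_gaussian: "integrable lborel (\<lambda>w. exp (- pi * (w - \<xi>)\<^sup>2))"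
  using lborel_integrable_real_affine[OF integrable_gaussian, of 1 "- \<xi>"] by simp

lemma integral_cis_shifted_gaussian:
  "(\<integral>w. cis (- 2 * pi * s * w) * complex_of_real (exp (- pi * (w - \<xi>)\<^sup>2)) \<partial>lborel)
     = cis (- 2 * pi * s * \<xi>) * exp (- pi * s\<^sup>2)"
proof -
  have "(\<integral>w. cis (- 2 * pi * s * w) * complex_of_real (exp (- pi * (w - \<xi>)\<^sup>2)) \<partial>lborel)
      = (\<integral>u. cis (- 2 * pi * s * \<xi>) * (cis ((- 2 * pi * s) * u) * complex_of_real (exp (- pi * u\<^sup>2))) \<partial>lborel)"
    by (subst lborel_integral_real_affine[where c = 1 and t = \<xi>])
      (simp_all add: cis_mult algebra_simps)
  also have "\<dots> = cis (- 2 * pi * s * \<xi>) * exp (- ((- 2 * pi * s)\<^sup>2) / (4 * pi))"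
    by (simp only: integral_mult_right_zero integral_cis_gaussian)
  also have "(- ((- 2 * pi * s)\<^sup>2) / (4 * pi)) = - pi * s\<^sup>2"
    by (simp add: power2_eq_square field_simps)
  finally show ?thesis .
qed

lemma integral_cis_modulated_gaussian:
  "(\<integral>t. cis (2 * pi * w * t) * (cis (- 2 * pi * \<xi> * t) * complex_of_real (exp (- pi * t\<^sup>2))) \<partial>lborel)
     = exp (- pi * (w - \<xi>)\<^sup>2)"
proof -
  have "cis (2 * pi * w * t) * (cis (- 2 * pi * \<xi> * t) * complex_of_real (exp (- pi * t\<^sup>2)))
      = cis ((2 * pi * (w - \<xi>)) * t) * complex_of_real (exp (- pi * t\<^sup>2))" for t
    by (simp add: cis_mult algebra_simps)
  then have "(\<integral>t. cis (2 * pi * w * t) * (cis (- 2 * pi * \<xi> * t) * complex_of_real (exp (- pi * t\<^sup>2))) \<partial>lborel)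
      = (\<integral>t. cis ((2 * pi * (w - \<xi>)) * t) * complex_of_real (exp (- pi * t\<^sup>2)) \<partial>lborel)"
    by (simp only:)
  also have "\<dots> = exp (- ((2 * pi * (w - \<xi>))\<^sup>2) / (4 * pi))"
    by (rule integral_cis_gaussian)
  also have "- ((2 * pi * (w - \<xi>))\<^sup>2) / (4 * pi) = - pi * (w - \<xi>)\<^sup>2"
    by (simp add: power2_eq_square field_simps)
  finally show ?thesis .
qed

lemma integrable_lborel_pair_mult:
  fixes a b :: "real \<Rightarrow> real"
  assumes a: "integrable lborel a" and b: "integrable lborel b"
  shows "integrable (lborel \<Otimes>\<^sub>M lborel) (\<lambda>z. a (fst z) * b (snd z))"
proof (rule integrableI_bounded)
  have [measurable]: "a \<in> borel_measurable borel" "b \<in> borel_measurable borel"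
    using borel_measurable_integrable[OF a] borel_measurable_integrable[OF b] by simp_all
  show "(\<lambda>z. a (fst z) * b (snd z)) \<in> borel_measurable (lborel \<Otimes>\<^sub>M lborel)" by measurable
  have "(\<integral>\<^sup>+z. ennreal (norm (a (fst z) * b (snd z))) \<partial>(lborel \<Otimes>\<^sub>M lborel))
      = (\<integral>\<^sup>+x. \<integral>\<^sup>+y. ennreal (norm (a x)) * ennreal (norm (b y)) \<partial>lborel \<partial>lborel)"
    by (subst lborel.nn_integral_fst[symmetric]) (simp_all add: abs_mult ennreal_mult)
  also have "\<dots> = (\<integral>\<^sup>+x. ennreal (norm (a x)) \<partial>lborel) * (\<integral>\<^sup>+y. ennreal (norm (b y)) \<partial>lborel)"
    by (simp add: nn_integral_cmult nn_integral_multc)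
  also have "\<dots> < \<infinity>"
    using a b by (simp add: integrable_iff_bounded ennreal_mult_less_top)
  finally show "(\<integral>\<^sup>+z. ennreal (norm (a (fst z) * b (snd z))) \<partial>(lborel \<Otimes>\<^sub>M lborel)) < \<infinity>" .
qed

lemma integral_mult_cis_kernel_swap:
  fixes u v :: "real \<Rightarrow> complex" and \<phi> :: "real \<Rightarrow> real \<Rightarrow> real"
  assumes u: "integrable lborel u" and v: "integrable lborel v"
    and \<phi>[measurable]: "(\<lambda>z. \<phi> (fst z) (snd z)) \<in> borel_measurable (lborel \<Otimes>\<^sub>M lborel)"
  shows "(\<integral>x. u x * (\<integral>y. cis (\<phi> x y) * v y \<partial>lborel) \<partial>lborel)
       = (\<integral>y. v y * (\<integral>x. cis (\<phi> x y) * u x \<partial>lborel) \<partial>lborel)"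
proof -
  have [measurable]: "u \<in> borel_measurable borel" "v \<in> borel_measurable borel"
    using borel_measurable_integrable[OF u] borel_measurable_integrable[OF v] by simp_all
  define K where "K z = cis (\<phi> (fst z) (snd z)) * u (fst z) * v (snd z)" for z
  have "integrable (lborel \<Otimes>\<^sub>M lborel) K"
  proof (rule Bochner_Integration.integrable_bound)
    show "integrable (lborel \<Otimes>\<^sub>M lborel) (\<lambda>z. norm (u (fst z)) * norm (v (snd z)))"
      using u v by (intro integrable_lborel_pair_mult) simp_all
    show "K \<in> borel_measurable (lborel \<Otimes>\<^sub>M lborel)" unfolding K_def by measurable
    show "AE z in lborel \<Otimes>\<^sub>M lborel. norm (K z) \<le> norm (norm (u (fst z)) * norm (v (snd z)))"
      by (simp add: K_def norm_mult)
  qed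
  then have "(\<integral>x. \<integral>y. K (x, y) \<partial>lborel \<partial>lborel) = (\<integral>y. \<integral>x. K (x, y) \<partial>lborel \<partial>lborel)"
    by (intro lborel_pair.Fubini_integral[symmetric]) (simp add: split_beta')
  moreover have "(\<integral>y. K (x, y) \<partial>lborel) = u x * (\<integral>y. cis (\<phi> x y) * v y \<partial>lborel)" for x
    by (simp add: K_def mult_ac flip: integral_mult_right_zero)
  moreover have "(\<integral>x. K (x, y) \<partial>lborel) = v y * (\<integral>x. cis (\<phi> x y) * u x \<partial>lborel)" for y
    by (simp add: K_def mult_ac flip: integral_mult_right_zero)
  ultimately show ?thesis by simp
qed

lemma normalized_density_lborel:
  fixes r :: "real \<Rightarrow> real"
  assumes r: "integrable lborel r" "\<And>x. r x \<ge> 0" "(\<integral>x. r x \<partial>lborel) = c" and c: "c > 0"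
  shows "real_distribution (density lborel (\<lambda>x. ennreal (r x / c)))"
    and "char (density lborel (\<lambda>x. ennreal (r x / c))) t = (\<integral>x. cis (t * x) * r x \<partial>lborel) / c"
proof -
  have [measurable]: "r \<in> borel_measurable borel"
    using borel_measurable_integrable[OF r(1)] by simp
  have "emeasure (density lborel (\<lambda>x. ennreal (r x / c))) UNIV = ennreal (\<integral>x. r x / c \<partial>lborel)"
    using r c by (simp add: emeasure_density nn_integral_eq_integral)
  then have "prob_space (density lborel (\<lambda>x. ennreal (r x / c)))"
    using r(3) c by (intro prob_spaceI) simp
  then show "real_distribution (density lborel (\<lambda>x. ennreal (r x / c)))"
    by (auto intro!: real_distribution.intro simp: real_distribution_axioms_def)
  have "char (density lborel (\<lambda>x. ennreal (r x / c))) t = (\<integral>x. (r x / c) *\<^sub>R iexp (t * x) \<partial>lborel)"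
    unfolding char_def using r c by (subst integral_density) auto
  also have "\<dots> = (\<integral>x. cis (t * x) * r x / c \<partial>lborel)"
    by (intro Bochner_Integration.integral_cong) (simp_all add: scaleR_conv_of_real cis_conv_exp field_simps)
  finally show "char (density lborel (\<lambda>x. ennreal (r x / c))) t = (\<integral>x. cis (t * x) * r x \<partial>lborel) / c"
    by (simp add: integral_divide_zero)
qed

lemma AE_eq_if_integral_cis_eq_nonneg:
  fixes p q :: "real \<Rightarrow> real"
  assumes p: "integrable lborel p" "\<And>x. p x \<ge> 0" and q: "integrable lborel q" "\<And>x. q x \<ge> 0"
    and eq: "\<And>t. (\<integral>x. cis (t * x) * p x \<partial>lborel) = (\<integral>x. cis (t * x) * q x \<partial>lborel)"
  shows "AE x in lborel. p x = q x"
proof -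
  define c where "c = (\<integral>x. p x \<partial>lborel)"
  have c0: "c \<ge> 0" unfolding c_def using p by simp
  have qc: "(\<integral>x. q x \<partial>lborel) = c"
    using eq[of 0] unfolding c_def by simp
  show ?thesis
  proof (cases "c = 0")
    case True
    then have "(\<integral>x. p x \<partial>lborel) = 0" "(\<integral>x. q x \<partial>lborel) = 0"
      using qc unfolding c_def by simp_all
    then have "AE x in lborel. p x = 0" "AE x in lborel. q x = 0"
      using p q by (simp_all add: integral_nonneg_eq_0_iff_AE)
    then show ?thesis by eventually_elim simp
  next
    case False
    then have c_pos: "c > 0" using c0 by simp
    \<comment> \<open>Normalized by \<open>c\<close>, both functions are densities of probability measures on the line,
      which Levy's uniqueness theorem identifies through their characteristic functions.\<close>
    have "density lborel (\<lambda>x. ennreal (p x / c)) = density lborel (\<lambda>x. ennreal (q x / c))"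
      using p q qc c_pos eq unfolding c_def
      by (intro Levy_uniqueness normalized_density_lborel)
        (simp_all add: fun_eq_iff normalized_density_lborel)
    then have "AE x in lborel. ennreal (p x / c) = ennreal (q x / c)"
      using p q
      by (subst (asm) sigma_finite_measure.density_unique_iff[OF lborel.sigma_finite_measure_axioms])
        (auto dest: borel_measurable_integrable)
    then show ?thesis
      by eventually_elim (use p q c_pos in \<open>simp add: divide_right_mono\<close>)
  qed
qed

lemma integral_cis_zero_imp_AE_zero_real:
  fixes r :: "real \<Rightarrow> real"
  assumes r: "integrable lborel r" and zero: "\<And>t. (\<integral>x. cis (t * x) * r x \<partial>lborel) = 0"
  shows "AE x in lborel. r x = 0"
proof -
  have [measurable]: "r \<in> borel_measurable borel"
    using borel_measurable_integrable[OF r] by simp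
  define p where "p x = max (r x) 0" for x
  define q where "q x = max (- r x) 0" for x
  have p: "integrable lborel p" using r by (simp add: p_def[abs_def])
  have q: "integrable lborel q" using r by (simp add: q_def[abs_def])
  have r_eq: "r x = p x - q x" for x by (simp add: p_def q_def max_def)
  have "AE x in lborel. p x = q x"
  proof (rule AE_eq_if_integral_cis_eq_nonneg[OF p _ q])
    fix t
    have "integrable lborel (\<lambda>x. cis (t * x) * p x)" "integrable lborel (\<lambda>x. cis (t * x) * q x)"
      using p q by (auto intro!: integrable_cis_mult)
    then have "(\<integral>x. cis (t * x) * p x \<partial>lborel) - (\<integral>x. cis (t * x) * q x \<partial>lborel)
        = (\<integral>x. cis (t * x) * p x - cis (t * x) * q x \<partial>lborel)"
      by (rule Bochner_Integration.integral_diff[symmetric])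
    also have "\<dots> = (\<integral>x. cis (t * x) * r x \<partial>lborel)"
      by (simp add: r_eq algebra_simps)
    finally show "(\<integral>x. cis (t * x) * p x \<partial>lborel) = (\<integral>x. cis (t * x) * q x \<partial>lborel)"
      using zero[of t] by simp
  qed (simp_all add: p_def q_def)
  then show ?thesis by eventually_elim (simp add: r_eq)
qed

lemma integral_cis_mult_Re:
  fixes h :: "real \<Rightarrow> complex"
  assumes h: "integrable lborel h"
  shows "(\<integral>x. cis (t * x) * Re (h x) \<partial>lborel)
       = ((\<integral>x. cis (t * x) * h x \<partial>lborel) + cnj (\<integral>x. cis ((- t) * x) * h x \<partial>lborel)) / 2"
proof -
  have [measurable]: "h \<in> borel_measurable borel"
    using borel_measurable_integrable[OF h] by simp
  have pointwise: "cis (t * x) * Re (h x) = (cis (t * x) * h x + cnj (cis ((- t) * x) * h x)) / 2" for x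
  proof -
    have Re_eq: "complex_of_real (Re (h x)) = (h x + cnj (h x)) / 2" by (simp add: complex_add_cnj)
    have cnj_eq: "cnj (cis ((- t) * x) * h x) = cis (t * x) * cnj (h x)" by (simp add: cis_cnj)
    show ?thesis unfolding Re_eq cnj_eq by (simp add: field_simps)
  qed
  have "(\<integral>x. cis (t * x) * Re (h x) \<partial>lborel)
      = (\<integral>x. (cis (t * x) * h x + cnj (cis ((- t) * x) * h x)) / 2 \<partial>lborel)"
    by (simp only: pointwise)
  also have "\<dots> = (\<integral>x. cis (t * x) * h x + cnj (cis ((- t) * x) * h x) \<partial>lborel) / 2"
    by (rule integral_divide_zero)
  also have "\<dots> = ((\<integral>x. cis (t * x) * h x \<partial>lborel) + (\<integral>x. cnj (cis ((- t) * x) * h x) \<partial>lborel)) / 2"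
  proof -
    have "integrable lborel (\<lambda>x. cis (t * x) * h x)"
      using h by (intro integrable_cis_mult) auto
    moreover have "integrable lborel (\<lambda>x. cnj (cis ((- t) * x) * h x))"
      using h by (intro integrable_cnj integrable_cis_mult) auto
    ultimately show ?thesis by (simp only: Bochner_Integration.integral_add)
  qed
  also have "\<dots> = ((\<integral>x. cis (t * x) * h x \<partial>lborel) + cnj (\<integral>x. cis ((- t) * x) * h x \<partial>lborel)) / 2"
    by (simp only: Bochner_Integration.integral_cnj)
  finally show ?thesis .
qed

lemma integral_cis_zero_imp_AE_zero:
  fixes g :: "real \<Rightarrow> complex"
  assumes g: "integrable lborel g" and zero: "\<And>t. (\<integral>x. cis (t * x) * g x \<partial>lborel) = 0"
  shows "AE x in lborel. g x = 0"
proof -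
  have Re_zero: "AE x in lborel. Re (h x) = 0"
    if h: "integrable lborel h" "\<And>t. (\<integral>x. cis (t * x) * h x \<partial>lborel) = 0" for h
  proof (rule integral_cis_zero_imp_AE_zero_real)
    show "integrable lborel (\<lambda>x. Re (h x))" using h by simp
    show "(\<integral>x. cis (t * x) * Re (h x) \<partial>lborel) = 0" for t
      using h(2)[of t] h(2)[of "- t"] by (simp add: integral_cis_mult_Re[OF h(1)])
  qed
  have "AE x in lborel. Re (g x) = 0"
    using g zero by (rule Re_zero)
  moreover have "AE x in lborel. Re (- \<i> * g x) = 0"
  proof (rule Re_zero)
    show "integrable lborel (\<lambda>x. - \<i> * g x)" using g by simp
    have "(\<integral>x. cis (t * x) * (- \<i> * g x) \<partial>lborel) = - \<i> * (\<integral>x. cis (t * x) * g x \<partial>lborel)" for t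
      by (simp add: mult.left_commute)
    then show "(\<integral>x. cis (t * x) * (- \<i> * g x) \<partial>lborel) = 0" for t
      using zero[of t] by simp
  qed
  ultimately show ?thesis by eventually_elim (simp add: complex_eq_iff)
qed

lemma fourier_lborel:
  assumes [measurable]: "g \<in> borel_measurable borel"
  shows "fourier g w = (\<integral>x. cis (- 2 * pi * x * w) * g x \<partial>lborel)"
  unfolding fourier_def by (rule integral_completion) measurable

lemma borel_measurable_fourier[measurable]:
  assumes g[measurable]: "g \<in> borel_measurable borel"
  shows "fourier g \<in> borel_measurable borel"
proof -
  have "(\<lambda>w. \<integral>x. cis (- 2 * pi * x * w) * g x \<partial>lborel) \<in> borel_measurable borel"
    by (rule lborel.borel_measurable_lebesgue_integral) measurable
  moreover have "fourier g = (\<lambda>w. \<integral>x. cis (- 2 * pi * x * w) * g x \<partial>lborel)"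
    using fourier_lborel[OF g] by (rule ext)
  ultimately show ?thesis by simp
qed

lemma norm_fourier_le_L1:
  assumes "integrable lborel g"
  shows "norm (fourier g w) \<le> (\<integral>x. norm (g x) \<partial>lborel)"
proof -
  have "g \<in> borel_measurable borel"
    using borel_measurable_integrable[OF assms] by simp
  then have "norm (fourier g w) \<le> (\<integral>x. norm (cis (- 2 * pi * x * w) * g x) \<partial>lborel)"
    by (simp only: fourier_lborel integral_norm_bound)
  then show ?thesis by (simp add: norm_mult)
qed

definition inverse_fourier :: "(real \<Rightarrow> complex) \<Rightarrow> real \<Rightarrow> complex" where
  "inverse_fourier F t = (\<integral>w. cis (2 * pi * w * t) * F w \<partial>lborel)"

lemma borel_measurable_inverse_fourier[measurable]:
  assumes [measurable]: "F \<in> borel_measurable borel"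
  shows "inverse_fourier F \<in> borel_measurable borel"
  unfolding inverse_fourier_def[abs_def]
  by (rule lborel.borel_measurable_lebesgue_integral) measurable

lemma norm_inverse_fourier_le_L1:
  "norm (inverse_fourier F t) \<le> (\<integral>w. norm (F w) \<partial>lborel)"
proof -
  have "norm (inverse_fourier F t) \<le> (\<integral>w. norm (cis (2 * pi * w * t) * F w) \<partial>lborel)"
    unfolding inverse_fourier_def by (rule integral_norm_bound)
  then show ?thesis by (simp add: norm_mult)
qed

lemma integral_gaussian_mult_inverse_fourier:
  assumes F: "integrable lborel F"
  shows "(\<integral>t. (cis (- 2 * pi * \<xi> * t) * exp (- pi * t\<^sup>2)) * inverse_fourier F t \<partial>lborel)
       = (\<integral>w. F w * exp (- pi * (w - \<xi>)\<^sup>2) \<partial>lborel)"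
proof -
  have "integrable lborel (\<lambda>t. cis (- 2 * pi * \<xi> * t) * complex_of_real (exp (- pi * t\<^sup>2)))"
    using integrable_gaussian by (intro integrable_cis_mult) auto
  then have "(\<integral>t. (cis (- 2 * pi * \<xi> * t) * exp (- pi * t\<^sup>2)) * inverse_fourier F t \<partial>lborel)
      = (\<integral>w. F w * (\<integral>t. cis (2 * pi * w * t) * (cis (- 2 * pi * \<xi> * t) * exp (- pi * t\<^sup>2)) \<partial>lborel) \<partial>lborel)"
    unfolding inverse_fourier_def
    using F by (rule integral_mult_cis_kernel_swap[where \<phi> = "\<lambda>t w. 2 * pi * w * t"]) measurable
  then show ?thesis by (simp only: integral_cis_modulated_gaussian)
qed

lemma integral_shifted_gaussian_mult_fourier:
  assumes g: "integrable lborel g"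
  shows "(\<integral>w. exp (- pi * (w - \<xi>)\<^sup>2) * fourier g w \<partial>lborel)
       = (\<integral>s. g s * (cis (- 2 * pi * s * \<xi>) * exp (- pi * s\<^sup>2)) \<partial>lborel)"
proof -
  have [measurable]: "g \<in> borel_measurable borel"
    using borel_measurable_integrable[OF g] by simp
  have "integrable lborel (\<lambda>w. complex_of_real (exp (- pi * (w - \<xi>)\<^sup>2)))"
    using integrable_shifted_gaussian by simp
  then have "(\<integral>w. exp (- pi * (w - \<xi>)\<^sup>2) * fourier g w \<partial>lborel)
      = (\<integral>s. g s * (\<integral>w. cis (- 2 * pi * s * w) * exp (- pi * (w - \<xi>)\<^sup>2) \<partial>lborel) \<partial>lborel)"
    unfolding fourier_lborel[OF \<open>g \<in> borel_measurable borel\<close>]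
    using g by (rule integral_mult_cis_kernel_swap[where \<phi> = "\<lambda>w s. - 2 * pi * s * w"]) measurable
  then show ?thesis by (simp only: integral_cis_shifted_gaussian)
qed

text \<open>Both sides of the inversion formula have the same Fourier transform once damped by a
  Gaussian, by two applications of the multiplication formula; uniqueness finishes the proof.\<close>
lemma fourier_inversion:
  assumes g: "integrable lborel g" and ghat: "integrable lborel (fourier g)"
  shows "AE x in lborel. g x = inverse_fourier (fourier g) x"
proof -
  have [measurable]: "g \<in> borel_measurable borel"
    using borel_measurable_integrable[OF g] by simp
  define h where "h = inverse_fourier (fourier g)"
  define G where "G t = complex_of_real (exp (- pi * t\<^sup>2))" for t
  define B where "B = (\<integral>w. norm (fourier g w) \<partial>lborel)"
  have [measurable]: "h \<in> borel_measurable borel" "G \<in> borel_measurable borel"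
    unfolding h_def G_def by measurable
  have "integrable lborel (\<lambda>t. G t * g t)"
    by (rule Bochner_Integration.integrable_bound[OF g]) (auto simp: G_def norm_mult intro!: mult_left_le_one_le)
  moreover have "integrable lborel (\<lambda>t. G t * h t)"
  proof (rule Bochner_Integration.integrable_bound)
    show "integrable lborel (\<lambda>t. B * exp (- pi * t\<^sup>2))"
      using integrable_gaussian by (rule integrable_mult_right)
    show "AE t in lborel. norm (G t * h t) \<le> norm (B * exp (- pi * t\<^sup>2))"
      using norm_inverse_fourier_le_L1[of "fourier g"]
      by (auto simp: G_def h_def B_def norm_mult mult.commute intro: mult_left_mono)
  qed simp
  ultimately have diff: "integrable lborel (\<lambda>t. G t * (g t - h t))"
    by (simp add: right_diff_distrib)
  have "AE t in lborel. G t * (g t - h t) = 0"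
  proof (rule integral_cis_zero_imp_AE_zero[OF diff])
    fix \<tau>
    define \<xi> where "\<xi> = - \<tau> / (2 * pi)"
    have \<tau>: "\<tau> * t = - 2 * pi * \<xi> * t" for t unfolding \<xi>_def by simp
    have "(\<integral>t. (cis (- 2 * pi * \<xi> * t) * G t) * h t \<partial>lborel)
        = (\<integral>s. g s * (cis (- 2 * pi * s * \<xi>) * G s) \<partial>lborel)"
      using g ghat unfolding G_def h_def
      by (simp only: integral_gaussian_mult_inverse_fourier integral_shifted_gaussian_mult_fourier
          mult.commute[of "fourier g _"])
    then have "(\<integral>t. cis (\<tau> * t) * (G t * h t) \<partial>lborel) = (\<integral>t. cis (\<tau> * t) * (G t * g t) \<partial>lborel)"
      unfolding \<tau> by (simp add: mult_ac)
    moreover have "integrable lborel (\<lambda>t. cis (\<tau> * t) * (G t * g t))"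
      "integrable lborel (\<lambda>t. cis (\<tau> * t) * (G t * h t))"
      using \<open>integrable lborel (\<lambda>t. G t * g t)\<close> \<open>integrable lborel (\<lambda>t. G t * h t)\<close>
      by (auto intro!: integrable_cis_mult)
    ultimately show "(\<integral>t. cis (\<tau> * t) * (G t * (g t - h t)) \<partial>lborel) = 0"
      by (simp add: right_diff_distrib)
  qed
  then show ?thesis
    by eventually_elim (simp add: G_def h_def)
qed

lemma integrable_norm_square_if_AE_bounded:
  fixes g :: "real \<Rightarrow> complex"
  assumes g: "integrable lborel g" and bound: "AE x in lborel. norm (g x) \<le> B"
  shows "integrable lborel (\<lambda>x. (norm (g x))\<^sup>2)"
proof (rule Bochner_Integration.integrable_bound)
  show "integrable lborel (\<lambda>x. B * norm (g x))"
    using g by (intro integrable_mult_right) simp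
  show "(\<lambda>x. (norm (g x))\<^sup>2) \<in> borel_measurable lborel"
    using borel_measurable_integrable[OF g] by measurable
  from bound show "AE x in lborel. norm ((norm (g x))\<^sup>2) \<le> norm (B * norm (g x))"
    by eventually_elim (simp add: power2_eq_square abs_mult mult_right_mono)
qed

lemma L2_norm_sq_eq_integral:
  assumes "integrable lborel (\<lambda>x. (cmod (g x))\<^sup>2)"
  shows "L2_norm_sq g = ennreal (\<integral>x. (cmod (g x))\<^sup>2 \<partial>lborel)"
  unfolding L2_norm_sq_def nn_integral_completion
  using assms by (intro nn_integral_eq_integral) auto

lemma AE_norm_le_L1_fourier:
  assumes g: "integrable lborel g" and ghat: "integrable lborel (fourier g)"
  shows "AE x in lborel. norm (g x) \<le> (\<integral>w. norm (fourier g w) \<partial>lborel)"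
  using fourier_inversion[OF g ghat]
  by eventually_elim (simp add: norm_inverse_fourier_le_L1)

theorem plancherel:
  assumes g: "integrable lborel g" and ghat: "integrable lborel (fourier g)"
  shows "L2_norm_sq g = ennreal (\<integral>x. (cmod (g x))\<^sup>2 \<partial>lborel)"
    and "L2_norm_sq (fourier g) = L2_norm_sq g"
proof -
  have [measurable]: "g \<in> borel_measurable borel"
    using borel_measurable_integrable[OF g] by simp
  define h where "h = inverse_fourier (fourier g)"
  have g_eq_h: "AE x in lborel. g x = h x"
    unfolding h_def using g ghat by (rule fourier_inversion)
  have g2: "integrable lborel (\<lambda>x. (cmod (g x))\<^sup>2)"
    using AE_norm_le_L1_fourier[OF g ghat] by (rule integrable_norm_square_if_AE_bounded[OF g])
  have ghat2: "integrable lborel (\<lambda>w. (cmod (fourier g w))\<^sup>2)"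
    by (rule integrable_norm_square_if_AE_bounded[OF ghat AE_I2[OF norm_fourier_le_L1[OF g]]])
  have "complex_of_real (\<integral>x. (cmod (g x))\<^sup>2 \<partial>lborel) = (\<integral>x. cnj (g x) * g x \<partial>lborel)"
    by (simp only: complex_norm_square mult.commute[of "g _"] flip: integral_complex_of_real)
  also have "\<dots> = (\<integral>t. cnj (g t) * (\<integral>w. cis (2 * pi * w * t) * fourier g w \<partial>lborel) \<partial>lborel)"
    using g_eq_h by (intro integral_cong_AE) (auto simp: h_def inverse_fourier_def)
  also have "\<dots> = (\<integral>w. fourier g w * (\<integral>t. cis (2 * pi * w * t) * cnj (g t) \<partial>lborel) \<partial>lborel)"
    using g ghat by (intro integral_mult_cis_kernel_swap) auto
  also have "\<dots> = (\<integral>w. fourier g w * cnj (fourier g w) \<partial>lborel)"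
  proof -
    have "(\<integral>t. cis (2 * pi * w * t) * cnj (g t) \<partial>lborel) = cnj (fourier g w)" for w
      by (simp add: fourier_lborel cis_cnj mult_ac flip: Bochner_Integration.integral_cnj)
    then show ?thesis by simp
  qed
  also have "\<dots> = complex_of_real (\<integral>w. (cmod (fourier g w))\<^sup>2 \<partial>lborel)"
    by (simp only: complex_norm_square flip: integral_complex_of_real)
  finally have "(\<integral>x. (cmod (g x))\<^sup>2 \<partial>lborel) = (\<integral>w. (cmod (fourier g w))\<^sup>2 \<partial>lborel)"
    by (simp only: of_real_eq_iff)
  with g2 ghat2 show "L2_norm_sq g = ennreal (\<integral>x. (cmod (g x))\<^sup>2 \<partial>lborel)"
    and "L2_norm_sq (fourier g) = L2_norm_sq g"
    by (simp_all add: L2_norm_sq_eq_integral)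
qed

lemma nn_integral_inverse_1_plus_square:
  "(\<integral>\<^sup>+x. ennreal (inverse (1 + x\<^sup>2)) \<partial>lborel) = ennreal pi"
proof -
  have univ: "einterval (-\<infinity>) \<infinity> = (UNIV :: real set)" by (auto simp: einterval_def)
  have "integrable lborel (\<lambda>x::real. inverse (1 + x\<^sup>2))"
    using integrable_inverse_1_plus_square unfolding set_integrable_def univ by simp
  moreover have "(\<integral>x. inverse (1 + x\<^sup>2) \<partial>lborel) = pi"
    using LBINT_inverse_1_plus_square
    unfolding interval_lebesgue_integral_def set_lebesgue_integral_def univ by simp
  ultimately show ?thesis
    by (subst nn_integral_eq_integral) (auto intro!: AE_I2 add_nonneg_nonneg)
qed

lemma nn_integral_inverse_square_plus:
  assumes a: "a > 0"
  shows "(\<integral>\<^sup>+x. ennreal (1 / (a + x\<^sup>2)) \<partial>lborel) = ennreal (pi / sqrt a)"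
proof -
  have "ennreal (1 / (a + (0 + sqrt a * x)\<^sup>2)) = ennreal (1 / a) * ennreal (inverse (1 + x\<^sup>2))" for x
  proof -
    have "1 + x\<^sup>2 > 0" by (simp add: add_pos_nonneg)
    then show ?thesis using a by (simp add: power_mult_distrib field_simps flip: ennreal_mult)
  qed
  moreover have "(\<integral>\<^sup>+x. ennreal (1 / (a + x\<^sup>2)) \<partial>lborel)
      = ennreal (sqrt a) * (\<integral>\<^sup>+x. ennreal (1 / (a + (0 + sqrt a * x)\<^sup>2)) \<partial>lborel)"
    using nn_integral_real_affine[of "\<lambda>x. ennreal (1 / (a + x\<^sup>2))" "sqrt a" 0] a by simp
  ultimately have "(\<integral>\<^sup>+x. ennreal (1 / (a + x\<^sup>2)) \<partial>lborel) = ennreal (sqrt a) * (ennreal (1 / a) * ennreal pi)"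
    by (simp add: nn_integral_cmult nn_integral_inverse_1_plus_square)
  also have "\<dots> = ennreal (sqrt a * (1 / a) * pi)"
    using a by (simp add: ennreal_mult[symmetric] mult.assoc)
  also have "sqrt a * (1 / a) * pi = pi / sqrt a"
  proof -
    have "sqrt a * sqrt a = a" using a by simp
    then show ?thesis using a by (simp add: field_simps)
  qed
  finally show ?thesis .
qed

lemma nn_integral_norm_sq_le_weighted:
  fixes g :: "real \<Rightarrow> complex"
  assumes [measurable]: "g \<in> borel_measurable borel" and a: "a > 0"
  shows "(\<integral>\<^sup>+x. ennreal (cmod (g x)) \<partial>lborel)\<^sup>2
       \<le> (ennreal a * L2_norm_sq g + dispersion_sq g) * ennreal (pi / sqrt a)"
proof -
  \<comment> \<open>Cauchy--Schwarz for \<open>|g| = (\<surd>(a + x\<^sup>2) |g|) \<cdot> (1 / \<surd>(a + x\<^sup>2))\<close>.\<close>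
  define p where "p x = ennreal (sqrt (a + x\<^sup>2) * cmod (g x))" for x
  define q where "q x = ennreal (1 / sqrt (a + x\<^sup>2))" for x
  have pos: "a + x\<^sup>2 > 0" for x using a by (simp add: add_pos_nonneg)
  have [measurable]: "p \<in> borel_measurable lborel" "q \<in> borel_measurable lborel"
    unfolding p_def q_def by measurable
  have pq: "p x * q x = ennreal (cmod (g x))" for x
    using pos[of x] by (simp add: p_def q_def flip: ennreal_mult)
  have p2: "p x ^ 2 = ennreal a * ennreal ((cmod (g x))\<^sup>2) + ennreal (\<bar>x\<bar>\<^sup>2 * (cmod (g x))\<^sup>2)" for x
  proof -
    have "p x ^ 2 = ennreal ((sqrt (a + x\<^sup>2) * cmod (g x))\<^sup>2)"
      unfolding p_def using pos[of x] by (intro ennreal_power) simp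
    also have "(sqrt (a + x\<^sup>2) * cmod (g x))\<^sup>2 = a * (cmod (g x))\<^sup>2 + \<bar>x\<bar>\<^sup>2 * (cmod (g x))\<^sup>2"
      using pos[of x] by (simp add: power_mult_distrib algebra_simps)
    finally show ?thesis
      using a by (simp add: ennreal_mult)
  qed
  have q2: "q x ^ 2 = ennreal (1 / (a + x\<^sup>2))" for x
    using pos[of x] by (simp add: q_def ennreal_power power_divide)
  have "(\<integral>\<^sup>+x. p x * q x \<partial>lborel)\<^sup>2 \<le> (\<integral>\<^sup>+x. p x ^ 2 \<partial>lborel) * (\<integral>\<^sup>+x. q x ^ 2 \<partial>lborel)"
    by (rule Cauchy_Schwarz_nn_integral) simp_all
  also have "(\<integral>\<^sup>+x. p x ^ 2 \<partial>lborel) = ennreal a * L2_norm_sq g + dispersion_sq g"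
    unfolding p2 L2_norm_sq_def dispersion_sq_def nn_integral_completion
    by (simp add: nn_integral_add nn_integral_cmult)
  also have "(\<integral>\<^sup>+x. q x ^ 2 \<partial>lborel) = ennreal (pi / sqrt a)"
    unfolding q2 using a by (rule nn_integral_inverse_square_plus)
  finally show ?thesis unfolding pq .
qed

lemma AE_zero_if_L2_norm_sq_or_dispersion_sq_zero:
  fixes g :: "real \<Rightarrow> complex"
  assumes [measurable]: "g \<in> borel_measurable borel"
    and zero: "L2_norm_sq g = 0 \<or> dispersion_sq g = 0"
  shows "AE x in lborel. g x = 0"
  using zero
proof
  assume "L2_norm_sq g = 0"
  then have "AE x in lborel. ennreal ((cmod (g x))\<^sup>2) = 0"
    unfolding L2_norm_sq_def nn_integral_completion by (subst (asm) nn_integral_0_iff_AE) auto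
  then show ?thesis by eventually_elim simp
next
  assume "dispersion_sq g = 0"
  then have "AE x in lborel. ennreal (\<bar>x\<bar>\<^sup>2 * (cmod (g x))\<^sup>2) = 0"
    unfolding dispersion_sq_def nn_integral_completion by (subst (asm) nn_integral_0_iff_AE) auto
  with AE_lborel_singleton[of 0] show ?thesis
    by eventually_elim simp
qed

text \<open>A Carlson-type inequality: optimize the weight \<open>a\<close> in the previous lemma.\<close>
lemma nn_integral_norm_pow4_le_L2_dispersion:
  fixes g :: "real \<Rightarrow> complex"
  assumes [measurable]: "g \<in> borel_measurable borel"
  shows "(\<integral>\<^sup>+x. ennreal (cmod (g x)) \<partial>lborel) ^ 4 \<le> ennreal (4 * pi\<^sup>2) * L2_norm_sq g * dispersion_sq g"
proof (cases "L2_norm_sq g = 0 \<or> dispersion_sq g = 0")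
  case True
  then have "AE x in lborel. g x = 0"
    by (rule AE_zero_if_L2_norm_sq_or_dispersion_sq_zero[rotated]) simp
  then have "(\<integral>\<^sup>+x. ennreal (cmod (g x)) \<partial>lborel) = 0"
    by (subst nn_integral_0_iff_AE) (auto elim: eventually_mono)
  then show ?thesis by simp
next
  case nonzero: False
  show ?thesis
  proof (cases "L2_norm_sq g = \<infinity> \<or> dispersion_sq g = \<infinity>")
    case True
    then show ?thesis using nonzero by (auto simp: ennreal_mult_eq_top_iff)
  next
    case False
    then obtain A B where A: "L2_norm_sq g = ennreal A" "A > 0" and B: "dispersion_sq g = ennreal B" "B > 0"
      using nonzero by (cases "L2_norm_sq g"; cases "dispersion_sq g") auto
    have "(\<integral>\<^sup>+x. ennreal (cmod (g x)) \<partial>lborel)\<^sup>2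
        \<le> (ennreal (B / A) * ennreal A + ennreal B) * ennreal (pi / sqrt (B / A))"
      using nn_integral_norm_sq_le_weighted[of g "B / A"] A B by simp
    also have "\<dots> = ennreal (2 * pi * sqrt A * sqrt B)"
    proof -
      have "(B / A * A + B) * (pi / sqrt (B / A)) = 2 * pi * sqrt A * (B / sqrt B)"
        using A B by (simp add: real_sqrt_divide field_simps)
      then show ?thesis
        using A B by (simp add: real_div_sqrt ennreal_mult[symmetric] ennreal_plus[symmetric])
    qed
    finally have "((\<integral>\<^sup>+x. ennreal (cmod (g x)) \<partial>lborel)\<^sup>2)\<^sup>2 \<le> (ennreal (2 * pi * sqrt A * sqrt B))\<^sup>2"
      by (rule power_mono) simp
    also have "\<dots> = ennreal (4 * pi\<^sup>2) * ennreal A * ennreal B"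
      using A B by (simp add: ennreal_power power_mult_distrib ennreal_mult[symmetric])
    finally show ?thesis
      using A B by (simp add: power_mult[symmetric])
  qed
qed

lemma concentrated_L2_le_sup_measure:
  fixes f :: "real \<Rightarrow> complex"
  assumes U[measurable]: "U \<in> sets lebesgue" "emeasure lebesgue U < \<infinity>"
    and [measurable]: "f \<in> borel_measurable lebesgue"
    and conc: "eps_concentrated \<epsilon> U f"
    and bound: "AE x in lebesgue. cmod (f x) \<le> M"
    and L2: "L2_norm_sq f = ennreal n" "n \<ge> 0"
  shows "(1 - \<epsilon>\<^sup>2) * n \<le> M\<^sup>2 * measure lebesgue U"
proof -
  have "(\<integral>\<^sup>+x. indicator U x * ennreal ((cmod (f x))\<^sup>2) \<partial>lebesgue)
      \<le> (\<integral>\<^sup>+x. ennreal (M\<^sup>2) * indicator U x \<partial>lebesgue)"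
    using bound by (intro nn_integral_mono_AE) (auto split: split_indicator intro!: power_mono)
  also have "\<dots> = ennreal (M\<^sup>2 * measure lebesgue U)"
    using U by (simp add: nn_integral_cmult_indicator emeasure_eq_ennreal_measure ennreal_mult)
  finally have inside: "(\<integral>\<^sup>+x. indicator U x * ennreal ((cmod (f x))\<^sup>2) \<partial>lebesgue)
      \<le> ennreal (M\<^sup>2 * measure lebesgue U)" .
  have outside: "(\<integral>\<^sup>+x. indicator (UNIV - U) x * ennreal ((cmod (f x))\<^sup>2) \<partial>lebesgue) \<le> ennreal (\<epsilon>\<^sup>2 * n)"
    using conc L2 unfolding eps_concentrated_def by (simp add: ennreal_mult)
  have "ennreal n = (\<integral>\<^sup>+x. indicator U x * ennreal ((cmod (f x))\<^sup>2)
      + indicator (UNIV - U) x * ennreal ((cmod (f x))\<^sup>2) \<partial>lebesgue)"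
    unfolding L2(1)[symmetric] L2_norm_sq_def
    by (intro nn_integral_cong) (simp split: split_indicator)
  also have "\<dots> \<le> ennreal (M\<^sup>2 * measure lebesgue U) + ennreal (\<epsilon>\<^sup>2 * n)"
    using inside outside by (subst nn_integral_add) (auto intro: add_mono)
  also have "\<dots> = ennreal (M\<^sup>2 * measure lebesgue U + \<epsilon>\<^sup>2 * n)"
    using L2 by (simp add: ennreal_plus)
  finally have "ennreal n \<le> ennreal (M\<^sup>2 * measure lebesgue U + \<epsilon>\<^sup>2 * n)" .
  then have "n \<le> M\<^sup>2 * measure lebesgue U + \<epsilon>\<^sup>2 * n"
    using L2 by (subst (asm) ennreal_le_iff) auto
  then show ?thesis by (simp add: algebra_simps)
qed

lemma uncertainty_product_bound_real:
  fixes pT p\<Omega> n mT m\<Omega> a b dT d\<Omega> :: real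
  assumes nonneg: "0 \<le> pT" "0 \<le> p\<Omega>" "0 \<le> n" "0 \<le> a" "0 \<le> b" "0 \<le> dT" "0 \<le> d\<Omega>"
    and m: "0 < mT" "0 < m\<Omega>"
    and hT: "pT * n \<le> b\<^sup>2 * mT" and h\<Omega>: "p\<Omega> * n \<le> a\<^sup>2 * m\<Omega>"
    and ha: "a ^ 4 \<le> 4 * pi\<^sup>2 * n * dT" and hb: "b ^ 4 \<le> 4 * pi\<^sup>2 * n * d\<Omega>"
  shows "(pT * p\<Omega> / (4 * pi\<^sup>2 * mT * m\<Omega>) * n)\<^sup>2 \<le> dT * d\<Omega>"
proof (cases "n = 0")
  case True
  then show ?thesis using nonneg by simp
next
  case False
  then have n: "n > 0" using nonneg by simp
  have "(pT * n) * (p\<Omega> * n) \<le> (b\<^sup>2 * mT) * (a\<^sup>2 * m\<Omega>)"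
    using nonneg m by (intro mult_mono hT h\<Omega>) auto
  then have "pT * p\<Omega> * n\<^sup>2 \<le> (b\<^sup>2 * mT) * (a\<^sup>2 * m\<Omega>)"
    by (simp add: power2_eq_square mult_ac)
  then have "(pT * p\<Omega> * n\<^sup>2)\<^sup>2 \<le> ((b\<^sup>2 * mT) * (a\<^sup>2 * m\<Omega>))\<^sup>2"
    using nonneg by (intro power_mono) auto
  also have "\<dots> = (a ^ 4 * b ^ 4) * (mT\<^sup>2 * m\<Omega>\<^sup>2)"
    by algebra
  also have "\<dots> \<le> ((4 * pi\<^sup>2 * n * dT) * (4 * pi\<^sup>2 * n * d\<Omega>)) * (mT\<^sup>2 * m\<Omega>\<^sup>2)"
    using nonneg by (intro mult_right_mono mult_mono ha hb) auto
  finally have "(pT * p\<Omega> * n)\<^sup>2 * n\<^sup>2 \<le> (dT * d\<Omega> * (4 * pi\<^sup>2 * mT * m\<Omega>)\<^sup>2) * n\<^sup>2"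
    by (simp add: power2_eq_square power4_eq_xxxx algebra_simps)
  then have "(pT * p\<Omega> * n)\<^sup>2 \<le> dT * d\<Omega> * (4 * pi\<^sup>2 * mT * m\<Omega>)\<^sup>2"
    using n by simp
  then show ?thesis
    using m by (simp add: power_divide power_mult_distrib divide_le_eq)
qed

lemma uncertainty_product_bound:
  fixes pT p\<Omega> n mT m\<Omega> a b :: real and DT D\<Omega> :: ennreal
  assumes nonneg: "0 \<le> pT" "0 \<le> p\<Omega>" "0 \<le> n" "0 \<le> a" "0 \<le> b"
    and m: "0 < mT" "0 < m\<Omega>"
    and hT: "pT * n \<le> b\<^sup>2 * mT" and h\<Omega>: "p\<Omega> * n \<le> a\<^sup>2 * m\<Omega>"
    and ha: "ennreal a ^ 4 \<le> ennreal (4 * pi\<^sup>2) * ennreal n * DT"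
    and hb: "ennreal b ^ 4 \<le> ennreal (4 * pi\<^sup>2) * ennreal n * D\<Omega>"
  shows "(ennreal (pT * p\<Omega> / (4 * pi\<^sup>2 * mT * m\<Omega>)) * ennreal n)\<^sup>2 \<le> DT * D\<Omega>"
proof (cases "DT = \<infinity> \<or> D\<Omega> = \<infinity>")
  case True
  \<comment> \<open>The right-hand side is infinite unless the other dispersion vanishes; a vanishing
    dispersion forces a vanishing \<open>L\<^sup>1\<close> norm and, through the other concentration inequality,
    a vanishing left-hand side.\<close>
  have "pT * p\<Omega> * n = 0" if "DT = 0 \<or> D\<Omega> = 0"
  proof -
    have "a = 0 \<or> b = 0"
      using that ha hb nonneg by (auto simp: ennreal_power)
    then have "p\<Omega> * n \<le> 0 \<or> pT * n \<le> 0"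
      using hT h\<Omega> by auto
    then show ?thesis
      using nonneg by (auto simp: mult_le_0_iff)
  qed
  then show ?thesis
    using True m nonneg by (cases "DT = 0 \<or> D\<Omega> = 0") (auto simp: ennreal_mult_eq_top_iff)
next
  case False
  then obtain dT d\<Omega> where D: "DT = ennreal dT" "0 \<le> dT" "D\<Omega> = ennreal d\<Omega>" "0 \<le> d\<Omega>"
    by (cases DT; cases D\<Omega>) auto
  have "a ^ 4 \<le> 4 * pi\<^sup>2 * n * dT" and "b ^ 4 \<le> 4 * pi\<^sup>2 * n * d\<Omega>"
    using ha hb nonneg D by (simp_all add: ennreal_power ennreal_mult[symmetric] ennreal_le_iff)
  then have "(pT * p\<Omega> / (4 * pi\<^sup>2 * mT * m\<Omega>) * n)\<^sup>2 \<le> dT * d\<Omega>"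
    using nonneg m D hT h\<Omega> by (intro uncertainty_product_bound_real) auto
  then show ?thesis
    using nonneg m D by (simp add: ennreal_power ennreal_mult[symmetric])
qed

lemma L2_norm_sq_cong_AE: "AE x in lebesgue. f x = g x \<Longrightarrow> L2_norm_sq f = L2_norm_sq g"
  unfolding L2_norm_sq_def by (rule nn_integral_cong_AE) (auto elim: eventually_mono)

lemma dispersion_sq_cong_AE: "AE x in lebesgue. f x = g x \<Longrightarrow> dispersion_sq f = dispersion_sq g"
  unfolding dispersion_sq_def by (rule nn_integral_cong_AE) (auto elim: eventually_mono)

lemma eps_concentrated_cong_AE:
  assumes eq: "AE x in lebesgue. f x = g x"
  shows "eps_concentrated \<epsilon> U f \<longleftrightarrow> eps_concentrated \<epsilon> U g"
proof -
  have "(\<integral>\<^sup>+x. indicator (UNIV - U) x * ennreal ((cmod (f x))\<^sup>2) \<partial>lebesgue)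
      = (\<integral>\<^sup>+x. indicator (UNIV - U) x * ennreal ((cmod (g x))\<^sup>2) \<partial>lebesgue)"
    using eq by (intro nn_integral_cong_AE) (auto elim: eventually_mono)
  then show ?thesis
    unfolding eps_concentrated_def L2_norm_sq_cong_AE[OF eq] by simp
qed

lemma fourier_cong_AE:
  assumes [measurable]: "f \<in> borel_measurable lebesgue" "g \<in> borel_measurable lebesgue"
    and eq: "AE x in lebesgue. f x = g x"
  shows "fourier f = fourier g"
proof
  fix w
  have [measurable]: "(\<lambda>x. cis (- 2 * pi * x * w)) \<in> borel_measurable lebesgue"
    by (rule measurable_completion) measurable
  show "fourier f w = fourier g w"
    unfolding fourier_def
    by (rule integral_cong_AE) (measurable, measurable, use eq in \<open>auto elim: eventually_mono\<close>)
qed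

lemma lebesgue_measurable_ex_borel_AE_eq:
  fixes f :: "real \<Rightarrow> complex"
  assumes [measurable]: "f \<in> borel_measurable lebesgue"
  obtains g where "g \<in> borel_measurable borel" "AE x in lebesgue. f x = g x"
proof -
  have "(\<lambda>x. Re (f x)) \<in> borel_measurable (completion lborel)"
    "(\<lambda>x. Im (f x)) \<in> borel_measurable (completion lborel)"
    by measurable
  then obtain gr gi where [measurable]: "gr \<in> borel_measurable lborel" "gi \<in> borel_measurable lborel"
    and gr: "AE x in lborel. Re (f x) = gr x" and gi: "AE x in lborel. Im (f x) = gi x"
    by (blast dest: completion_ex_borel_measurable_real)
  have "(\<lambda>x. Complex (gr x) (gi x)) \<in> borel_measurable borel"
    by (simp add: Complex_eq) measurable
  moreover have "AE x in lebesgue. f x = Complex (gr x) (gi x)"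
    using gr gi by (intro AE_completion) (auto elim: eventually_mono simp: complex_eq_iff)
  ultimately show ?thesis by (rule that)
qed

theorem dispersion_product_lower_bound_borel:
  fixes T \<Omega> :: "real set" and g :: "real \<Rightarrow> complex" and \<epsilon>T \<epsilon>\<Omega> :: real
  assumes [measurable]: "g \<in> borel_measurable borel"
    and g: "integrable lborel g" and ghat: "integrable lborel (fourier g)"
    and T: "T \<in> sets lebesgue" "emeasure lebesgue T < \<infinity>" "0 < measure lebesgue T"
    and \<Omega>: "\<Omega> \<in> sets lebesgue" "emeasure lebesgue \<Omega> < \<infinity>" "0 < measure lebesgue \<Omega>"
    and \<epsilon>: "\<epsilon>T \<le> 1" "\<epsilon>\<Omega> \<le> 1"
    and concT: "eps_concentrated \<epsilon>T T g" and conc\<Omega>: "eps_concentrated \<epsilon>\<Omega> \<Omega> (fourier g)"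
  shows "dispersion_sq g * dispersion_sq (fourier g)
           \<ge> (ennreal ((1 - \<epsilon>T\<^sup>2) * (1 - \<epsilon>\<Omega>\<^sup>2)
                  / (4 * pi\<^sup>2 * measure lebesgue T * measure lebesgue \<Omega>)) * L2_norm_sq g)\<^sup>2"
proof -
  define n where "n = (\<integral>x. (cmod (g x))\<^sup>2 \<partial>lborel)"
  define a where "a = (\<integral>x. norm (g x) \<partial>lborel)"
  define b where "b = (\<integral>w. norm (fourier g w) \<partial>lborel)"
  have L2: "L2_norm_sq g = ennreal n" "L2_norm_sq (fourier g) = ennreal n"
    using plancherel[OF g ghat] by (simp_all add: n_def)
  have \<epsilon>_nonneg: "0 \<le> \<epsilon>T" "0 \<le> \<epsilon>\<Omega>"
    using concT conc\<Omega> by (simp_all add: eps_concentrated_def)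
  have lebesgue_measurable: "g \<in> borel_measurable lebesgue" "fourier g \<in> borel_measurable lebesgue"
    by (rule measurable_completion, simp)+
  have "AE x in lebesgue. cmod (g x) \<le> b"
    unfolding b_def using AE_norm_le_L1_fourier[OF g ghat] by (rule AE_completion)
  then have "(1 - \<epsilon>T\<^sup>2) * n \<le> b\<^sup>2 * measure lebesgue T"
    using T(1,2) lebesgue_measurable(1) concT L2(1) by (intro concentrated_L2_le_sup_measure) (auto simp: n_def)
  moreover have "(1 - \<epsilon>\<Omega>\<^sup>2) * n \<le> a\<^sup>2 * measure lebesgue \<Omega>"
    using \<Omega>(1,2) lebesgue_measurable(2) conc\<Omega> L2(2) norm_fourier_le_L1[OF g]
    by (intro concentrated_L2_le_sup_measure) (auto simp: n_def a_def)
  moreover have "ennreal a ^ 4 \<le> ennreal (4 * pi\<^sup>2) * ennreal n * dispersion_sq g"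
    using nn_integral_norm_pow4_le_L2_dispersion[of g] g L2(1)
    by (simp add: a_def nn_integral_eq_integral)
  moreover have "ennreal b ^ 4 \<le> ennreal (4 * pi\<^sup>2) * ennreal n * dispersion_sq (fourier g)"
    using nn_integral_norm_pow4_le_L2_dispersion[of "fourier g"] ghat L2(2)
    by (simp add: b_def nn_integral_eq_integral)
  ultimately have "(ennreal ((1 - \<epsilon>T\<^sup>2) * (1 - \<epsilon>\<Omega>\<^sup>2)
      / (4 * pi\<^sup>2 * measure lebesgue T * measure lebesgue \<Omega>)) * ennreal n)\<^sup>2
      \<le> dispersion_sq g * dispersion_sq (fourier g)"
    using T(3) \<Omega>(3) \<epsilon> \<epsilon>_nonneg
    by (intro uncertainty_product_bound) (auto simp: n_def a_def b_def power_le_one)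
  then show ?thesis by (simp add: L2(1))
qed

theorem mainTheorem10:
  fixes T \<Omega> :: "real set" and f :: "real \<Rightarrow> complex" and \<epsilon>T \<epsilon>\<Omega> :: real
  assumes T_meas: "T \<in> sets lebesgue" and \<Omega>_meas: "\<Omega> \<in> sets lebesgue"
    and pos: "0 < emeasure lebesgue T * emeasure lebesgue \<Omega>"
    and fin: "emeasure lebesgue T * emeasure lebesgue \<Omega> < \<infinity>"
    and f_L1: "integrable lebesgue f"
    and fhat_L1: "integrable lebesgue (fourier f)"
    and f_nonzero: "\<not> (AE x in lebesgue. f x = 0)"
    and epsT: "0 \<le> \<epsilon>T" "\<epsilon>T \<le> 1"
    and eps\<Omega>: "0 \<le> \<epsilon>\<Omega>" "\<epsilon>\<Omega> \<le> 1"
    and eps_sum: "\<epsilon>T + \<epsilon>\<Omega> \<le> 1"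
    and concT: "eps_concentrated \<epsilon>T T f"
    and conc\<Omega>: "eps_concentrated \<epsilon>\<Omega> \<Omega> (fourier f)"
  shows "dispersion_sq f * dispersion_sq (fourier f)
           \<ge> (ennreal ((1 - \<epsilon>T\<^sup>2) * (1 - \<epsilon>\<Omega>\<^sup>2)
                  / (4 * pi\<^sup>2 * measure lebesgue T * measure lebesgue \<Omega>)) * L2_norm_sq f)\<^sup>2"
proof -
  have f_meas: "f \<in> borel_measurable lebesgue"
    using f_L1 by (rule borel_measurable_integrable)
  obtain g where [measurable]: "g \<in> borel_measurable borel" and fg: "AE x in lebesgue. f x = g x"
    using lebesgue_measurable_ex_borel_AE_eq[OF f_meas] .
  have g_lborel: "g \<in> borel_measurable lborel" and g_meas: "g \<in> borel_measurable lebesgue"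
    by (simp, rule measurable_completion, simp)
  have fourier_eq: "fourier f = fourier g"
    using f_meas g_meas fg by (rule fourier_cong_AE)
  have "integrable lborel g"
    using integrable_cong_AE_imp[OF f_L1 g_meas fg] integrable_completion[OF g_lborel] by simp
  moreover have "integrable lborel (fourier g)"
    using fhat_L1 integrable_completion[of "fourier g" lborel] by (simp add: fourier_eq)
  moreover have "emeasure lebesgue T < \<infinity>" "0 < measure lebesgue T"
    "emeasure lebesgue \<Omega> < \<infinity>" "0 < measure lebesgue \<Omega>"
    using pos fin
    by (auto simp: ennreal_mult_less_top ennreal_zero_less_mult_iff top_unique less_top measure_def enn2real_positive_iff)
  ultimately show ?thesis
    using T_meas \<Omega>_meas epsT eps\<Omega> concT conc\<Omega>
    by (simp add: fourier_eq L2_norm_sq_cong_AE[OF fg] dispersion_sq_cong_AE[OF fg]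
        eps_concentrated_cong_AE[OF fg] dispersion_product_lower_bound_borel)
qed

end
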